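(* Let $M$ be an $n$-player Dec-POMDP satisfying hierarchical information sharing, fix a stage $\tau$, an occupancy state $s_\tau$ and a function $\beta_\tau$, and consider the common-payoff perfect-information extensive-form game $\bar G_{s_\tau}^{\beta_\tau}$ (defined in the context). For every player $i$, the nested-occupancy state $s^i_\tau=(b^i_\tau,o^i_\tau,u^{1:i-1}_\tau)$ is a sufficient statistic of the total data $\varsigma^i_\tau$ available to the planner for optimally solving $\bar G_{s_\tau}^{\beta_\tau}$.
   Context: An $n$-player Dec-POMDP is $M=\langle n,X,U,Z,p,r,s_0,\gamma,\ell\rangle$ with finite hidden-state set $X$, finite action sets $U^i$ ($U=\prod_iU^i$), finite observation sets $Z^i$ ($Z=\prod_iZ^i$), transition-observation probabilities $p(y,z\mid x,u)$, reward $r\colon X\times U\to\mathbb{R}$, initial distribution $s_0$, discount $\gamma$ and horizon $\ell$. Private histories are $o^i_\tau=(u^i_{0:\tau-1},z^i_{1:\tau})$, joint histories $o_\tau=(o^1_\tau,\dots,o^n_\tau)$. Hierarchical information sharing: for every $i>1$ there is a map $\zeta^i$ with $\zeta^i(z^i_\tau)=(u^{i-1}_{\tau-1},z^{i-1}_\tau)$, so that $o^i_\tau$ determines $o^1_\tau,\dots,o^{i-1}_\tau$. An occupancy state $s_\tau$ is a probability distribution over pairs (hidden state, joint history); $\beta_\tau$ is a real function of (hidden state, joint history, joint action). Extensive-form game $\bar G_{s_\tau}^{\beta_\tau}$: nodes of player $1$ are $\varsigma^1_\tau=(s_\tau,o^1_\tau)$, reached with the marginal probability of $o^1_\tau$ under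 $s_\tau$; at node $\varsigma^i_\tau$ the planner picks $u^i_\tau\in U^i$ and for $i<n$ moves to $\varsigma^{i+1}_\tau=(\varsigma^i_\tau,u^i_\tau,o^{i+1}_\tau)$ with probability $T(\varsigma^{i+1}_\tau\mid\varsigma^i_\tau,u^i_\tau)=\Pr\{o^{i+1}_\tau\mid s_\tau,o^1_\tau,\dots,o^i_\tau\}$; after $u^n_\tau$ at $\varsigma^n_\tau$ the common payoff is $R(\varsigma^n_\tau,u^n_\tau)=\mathbb{E}_{x\sim\Pr\{\cdot\mid\varsigma^n_\tau\}}\{\beta_\tau(x,o,u)\}$ with $o,u$ the joint history and joint action read off the node. Thus $\varsigma^i_\tau$ consists of $s_\tau$, the histories $o^1_\tau,\dots,o^i_\tau$ and the actions $u^{1:i-1}_\tau=(u^1_\tau,\dots,u^{i-1}_\tau)$ chosen so far; it is called the total data available to the planner at player $i$. Let $\beta^{i,*}_\tau(\varsigma^i_\tau,u^i_\tau)$ denote the optimal action-value functions of $\bar G_{s_\tau}^{\beta_\tau}$ (maximal expected payoff after playing $u^i_\tau$ at $\varsigma^i_\tau$). Nested-belief states: $b^n_\tau$ is the posterior $b^n_\tau(x)=\Pr\{x\mid\varsigma^n_\tau\}$ over hidden states; for $i<n$, $b^i_\tau$ is the posterior distribution $b^i_\tau(o^{i+1}_\tau,b^{i+1}_\tau)=\Pr\{o^{i+1}_\tau,b^{i+1}_\tau\mid\varsigma^i_\tau\}$ over the history of player $i+1$ and the nested-belief state of player $i+1$. The nested-occupancy state at player $i$ is $s^i_\tau=(b^i_\tau,o^i_\tau,u^{1:i-1}_\tau)$.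 Sufficiency: $s^i_\tau$ is a sufficient statistic of $\varsigma^i_\tau$ for optimally solving $\bar G_{s_\tau}^{\beta_\tau}$ if (1) for every action $u^i_\tau$ the distribution of the next nested-occupancy state $s^{i+1}_\tau$ given $(\varsigma^i_\tau,u^i_\tau)$ depends on $\varsigma^i_\tau$ only through $s^i_\tau$, (2) the payoff $R(\varsigma^n_\tau,u^n_\tau)$ depends on $\varsigma^n_\tau$ only through $s^n_\tau$, so that, consequently, the optimal action-values satisfy $\beta^{i,*}_\tau(\varsigma^i_\tau,u^i_\tau)=\tilde\beta^{i,*}_\tau(s^i_\tau,u^i_\tau)$ for the optimal action-value functions $\tilde\beta^{i,*}_\tau$ of the extensive-form game whose nodes are nested-occupancy states. *)

theory Defs
  imports "HOL-Probability.Probability"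
begin

(* Private history of a player at stage tau: (u_{0:tau-1}, z_{1:tau}) *)
type_synonym ('u,'z) hist = "'u list \<times> 'z list"

(* Players are 1..n; in lists, player i sits at index i-1. *)
record ('x,'u,'z) decpomdp =
  nP :: nat
  Xs :: "'x set"
  Us :: "nat \<Rightarrow> 'u set"
  Zs :: "nat \<Rightarrow> 'z set"
  trans :: "'x \<Rightarrow> 'u list \<Rightarrow> ('x \<times> 'z list) pmf"
  rew :: "'x \<Rightarrow> 'u list \<Rightarrow> real"
  init :: "'x pmf"
  disc :: real
  horizon :: nat

definition joint_action :: "('x,'u,'z) decpomdp \<Rightarrow> 'u list \<Rightarrow> bool" where
  "joint_action M u \<longleftrightarrow> length u = nP M \<and> (\<forall>i<nP M. u ! i \<in> Us M (Suc i))"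

definition is_decpomdp :: "('x,'u,'z) decpomdp \<Rightarrow> bool" where
  "is_decpomdp M \<longleftrightarrow> nP M \<ge> 1 \<and> finite (Xs M) \<and> Xs M \<noteq> {} \<and>
     (\<forall>i\<in>{1..nP M}. finite (Us M i) \<and> Us M i \<noteq> {} \<and> finite (Zs M i) \<and> Zs M i \<noteq> {}) \<and>
     set_pmf (init M) \<subseteq> Xs M \<and>
     (\<forall>x\<in>Xs M. \<forall>u. joint_action M u \<longrightarrow>
        (\<forall>(y,z)\<in>set_pmf (trans M x u). y \<in> Xs M \<and> length z = nP M \<and>
            (\<forall>i<nP M. z ! i \<in> Zs M (Suc i)))) \<and>
     0 \<le> disc M \<and> disc M \<le> 1"

(* Hierarchical information sharing: zeta i (z^i_t) = (u^{i-1}_{t-1}, z^{i-1}_t) *)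
definition hier_info_sharing ::
  "('x,'u,'z) decpomdp \<Rightarrow> (nat \<Rightarrow> 'z \<Rightarrow> 'u \<times> 'z) \<Rightarrow> bool" where
  "hier_info_sharing M \<zeta> \<longleftrightarrow>
     (\<forall>i\<in>{2..nP M}.
        (\<forall>z\<in>Zs M i. \<zeta> i z \<in> Us M (i - 1) \<times> Zs M (i - 1)) \<and>
        (\<forall>x\<in>Xs M. \<forall>u. joint_action M u \<longrightarrow>
           (\<forall>(y,z)\<in>set_pmf (trans M x u). \<zeta> i (z ! (i - 1)) = (u ! (i - 2), z ! (i - 2)))))"

definition joint_hist ::
  "('x,'u,'z) decpomdp \<Rightarrow> (nat \<Rightarrow> 'z \<Rightarrow> 'u \<times> 'z) \<Rightarrow> nat \<Rightarrow> ('u,'z) hist list \<Rightarrow> bool" where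
  "joint_hist M \<zeta> \<tau> jo \<longleftrightarrow> length jo = nP M \<and>
     (\<forall>i\<in>{1..nP M}. length (fst (jo ! (i - 1))) = \<tau> \<and> length (snd (jo ! (i - 1))) = \<tau> \<and>
        set (fst (jo ! (i - 1))) \<subseteq> Us M i \<and> set (snd (jo ! (i - 1))) \<subseteq> Zs M i) \<and>
     (\<forall>i\<in>{2..nP M}. \<forall>t<\<tau>.
        \<zeta> i (snd (jo ! (i - 1)) ! t) = (fst (jo ! (i - 2)) ! t, snd (jo ! (i - 2)) ! t))"

definition occupancy_state ::
  "('x,'u,'z) decpomdp \<Rightarrow> (nat \<Rightarrow> 'z \<Rightarrow> 'u \<times> 'z) \<Rightarrow> nat \<Rightarrow> ('x \<times> ('u,'z) hist list) pmf \<Rightarrow> bool" where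
  "occupancy_state M \<zeta> \<tau> s \<longleftrightarrow> (\<forall>(x,jo)\<in>set_pmf s. x \<in> Xs M \<and> joint_hist M \<zeta> \<tau> jo)"

definition cset :: "'h list \<Rightarrow> ('x \<times> 'h list) set" where
  "cset os = {(x,jo). take (length os) jo = os}"

(* Node varsigma^i = (s, jo^1..jo^i, u^1..u^{i-1}) of the game, reached with positive probability *)
definition node :: "('x,'u,'z) decpomdp \<Rightarrow> ('x \<times> ('u,'z) hist list) pmf \<Rightarrow> nat
                    \<Rightarrow> ('u,'z) hist list \<Rightarrow> 'u list \<Rightarrow> bool" where
  "node M s i os us \<longleftrightarrow> 1 \<le> i \<and> i \<le> nP M \<and> length os = i \<and> length us = i - 1 \<and>
     (\<forall>j<i - 1. us ! j \<in> Us M (Suc j)) \<and> set_pmf s \<inter> cset os \<noteq> {}"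

(* Nested belief states: b^n is a distribution over hidden states, b^i (i<n) a
   distribution over pairs (jo^{i+1}, b^{i+1}). *)
datatype ('x,'h) nbel = BelX "'x pmf" | BelN "('h \<times> ('x,'h) nbel) pmf"

(* nb s k os: nested belief of player i = length os, where k = n - i *)
primrec nb :: "('x \<times> 'h list) pmf \<Rightarrow> nat \<Rightarrow> 'h list \<Rightarrow> ('x,'h) nbel" where
  "nb s 0 os = BelX (map_pmf fst (cond_pmf s (cset os)))"
| "nb s (Suc k) os = BelN (map_pmf (\<lambda>(x,jo). (jo ! length os, nb s k (take (Suc (length os)) jo)))
                                   (cond_pmf s (cset os)))"

definition nocc :: "('x,'u,'z) decpomdp \<Rightarrow> ('x \<times> ('u,'z) hist list) pmf
                    \<Rightarrow> ('u,'z) hist list \<Rightarrow> 'u list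
                    \<Rightarrow> ('x, ('u,'z) hist) nbel \<times> ('u,'z) hist \<times> 'u list" where
  "nocc M s os us = (nb s (nP M - length os) os, last os, us)"

definition next_nocc :: "('x,'u,'z) decpomdp \<Rightarrow> ('x \<times> ('u,'z) hist list) pmf
                    \<Rightarrow> ('u,'z) hist list \<Rightarrow> 'u list \<Rightarrow> 'u
                    \<Rightarrow> (('x, ('u,'z) hist) nbel \<times> ('u,'z) hist \<times> 'u list) pmf" where
  "next_nocc M s os us u =
     map_pmf (\<lambda>(x,jo). nocc M s (take (Suc (length os)) jo) (us @ [u])) (cond_pmf s (cset os))"

definition payoff :: "('x \<times> 'h list) pmf \<Rightarrow> ('x \<Rightarrow> 'h list \<Rightarrow> 'u list \<Rightarrow> real)
                      \<Rightarrow> 'h list \<Rightarrow> 'u list \<Rightarrow> 'u \<Rightarrow> real" where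
  "payoff s \<beta> os us u =
     measure_pmf.expectation (cond_pmf s (cset os)) (\<lambda>(x,jo). \<beta> x jo (us @ [u]))"

(* Optimal action values beta^{i,*}(varsigma^i, u^i) of the game, by backward
   induction; k = n - i stages remain. *)
primrec Qv :: "('x,'u,'z) decpomdp \<Rightarrow> ('x \<times> ('u,'z) hist list) pmf
               \<Rightarrow> ('x \<Rightarrow> ('u,'z) hist list \<Rightarrow> 'u list \<Rightarrow> real)
               \<Rightarrow> nat \<Rightarrow> ('u,'z) hist list \<Rightarrow> 'u list \<Rightarrow> 'u \<Rightarrow> real" where
  "Qv M s \<beta> 0 os us u = payoff s \<beta> os us u"
| "Qv M s \<beta> (Suc k) os us u =
     measure_pmf.expectation (cond_pmf s (cset os))
       (\<lambda>(x,jo). Max ((\<lambda>u'. Qv M s \<beta> k (take (Suc (length os)) jo) (us @ [u]) u')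
                        ` Us M (Suc (length os))))"

(* Recovering jo^1..jo^i from jo^i via the maps zeta *)
definition prev_hist :: "(nat \<Rightarrow> 'z \<Rightarrow> 'u \<times> 'z) \<Rightarrow> nat \<Rightarrow> ('u,'z) hist \<Rightarrow> ('u,'z) hist" where
  "prev_hist \<zeta> i h = (map (\<lambda>z. fst (\<zeta> i z)) (snd h), map (\<lambda>z. snd (\<zeta> i z)) (snd h))"

fun recon :: "(nat \<Rightarrow> 'z \<Rightarrow> 'u \<times> 'z) \<Rightarrow> nat \<Rightarrow> ('u,'z) hist \<Rightarrow> ('u,'z) hist list" where
  "recon \<zeta> 0 h = []"
| "recon \<zeta> (Suc 0) h = [h]"
| "recon \<zeta> (Suc (Suc k)) h = recon \<zeta> (Suc k) (prev_hist \<zeta> (Suc (Suc k)) h) @ [h]"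

(* Optimal action values of the extensive-form game whose nodes are
   nested-occupancy states (b^i, jo^i, u^{1:i-1}); player i = length us + 1,
   k = n - i stages remain.  Transitions: (jo^{i+1}, b^{i+1}) ~ b^i;
   payoff at level n: E_{x ~ b^n} beta(x, jo, u) with jo recovered from jo^n. *)
primrec Qt :: "('x,'u,'z) decpomdp \<Rightarrow> (nat \<Rightarrow> 'z \<Rightarrow> 'u \<times> 'z)
               \<Rightarrow> ('x \<Rightarrow> ('u,'z) hist list \<Rightarrow> 'u list \<Rightarrow> real)
               \<Rightarrow> nat \<Rightarrow> ('x, ('u,'z) hist) nbel \<Rightarrow> ('u,'z) hist \<Rightarrow> 'u list \<Rightarrow> 'u \<Rightarrow> real" where
  "Qt M \<zeta> \<beta> 0 b h us u =
     (case b of BelX p \<Rightarrow> measure_pmf.expectation p (\<lambda>x. \<beta> x (recon \<zeta> (nP M) h) (us @ [u]))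
              | BelN _ \<Rightarrow> 0)"
| "Qt M \<zeta> \<beta> (Suc k) b h us u =
     (case b of BelN p \<Rightarrow> measure_pmf.expectation p
                 (\<lambda>(h',b'). Max ((\<lambda>u'. Qt M \<zeta> \<beta> k b' h' (us @ [u]) u') ` Us M (length us + 2)))
              | BelX _ \<Rightarrow> 0)"

end

theory Submission
  imports Defs
begin

text \<open>
  Every joint history in the support of an occupancy state is consistent with the sharing
  maps \<open>\<zeta>\<close>, so the history of player \<open>n\<close> determines the whole joint history.  Hence at a
  node of player \<open>n\<close> the nested-occupancy state pins down the node, and with it the payoff.
  At a node of player \<open>i < n\<close> the nested belief \<open>b\<^sup>i\<close> is by construction the law of
  \<open>(o\<^sup>i\<^sup>+\<^sup>1, b\<^sup>i\<^sup>+\<^sup>1)\<close>, so the next nested-occupancy state is \<open>b\<^sup>i\<close> pushed forward by appending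
  \<open>u\<^sup>i\<close>.  Backward induction over the remaining players then identifies the optimal action
  values of the two games.
\<close>

lemma set_cond_pmf_cset:
  assumes "set_pmf s \<inter> cset os \<noteq> {}" and "(x, jo) \<in> set_pmf (cond_pmf s (cset os))"
  shows "(x, jo) \<in> set_pmf s" and "take (length os) jo = os"
  using assms set_cond_pmf[OF assms(1)] by (auto simp: cset_def)

lemma last_take_Suc: "i < length xs \<Longrightarrow> last (take (Suc i) xs) = xs ! i"
  by (simp add: take_Suc_conv_app_nth)

lemma joint_hist_length: "joint_hist M \<zeta> \<tau> jo \<Longrightarrow> length jo = nP M"
  by (simp add: joint_hist_def)

lemma prev_hist_joint_hist:
  assumes jo: "joint_hist M \<zeta> \<tau> jo" and m: "Suc m < nP M"
  shows "prev_hist \<zeta> (Suc (Suc m)) (jo ! Suc m) = jo ! m"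
proof -
  have len: "length (fst (jo ! j)) = \<tau>" "length (snd (jo ! j)) = \<tau>" if "j < nP M" for j
  proof -
    have "Suc j \<in> {1..nP M}" using that by simp
    then show "length (fst (jo ! j)) = \<tau>" "length (snd (jo ! j)) = \<tau>"
      using jo unfolding joint_hist_def by fastforce+
  qed
  have shared: "\<zeta> (Suc (Suc m)) (snd (jo ! Suc m) ! t) = (fst (jo ! m) ! t, snd (jo ! m) ! t)"
    if "t < \<tau>" for t
  proof -
    have "Suc (Suc m) \<in> {2..nP M}" using m by simp
    then show ?thesis using jo that unfolding joint_hist_def by fastforce
  qed
  have "map (\<lambda>z. fst (\<zeta> (Suc (Suc m)) z)) (snd (jo ! Suc m)) = fst (jo ! m)"
   and "map (\<lambda>z. snd (\<zeta> (Suc (Suc m)) z)) (snd (jo ! Suc m)) = snd (jo ! m)"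
    using len[of m] len[of "Suc m"] shared m by (auto intro!: nth_equalityI)
  then show ?thesis by (simp add: prev_hist_def prod_eq_iff)
qed

lemma recon_joint_hist:
  assumes "joint_hist M \<zeta> \<tau> jo"
  shows "m < nP M \<Longrightarrow> recon \<zeta> (Suc m) (jo ! m) = take (Suc m) jo"
proof (induction m)
  case 0
  then show ?case using joint_hist_length[OF assms] by (cases jo) auto
next
  case (Suc m)
  then show ?case
    using prev_hist_joint_hist[OF assms Suc.prems] joint_hist_length[OF assms]
    by (simp add: take_Suc_conv_app_nth)
qed

lemma recon_last_joint_hist:
  assumes "joint_hist M \<zeta> \<tau> jo" and "1 \<le> nP M"
  shows "recon \<zeta> (nP M) (last jo) = jo"
proof -
  have len: "length jo = nP M" using assms(1) by (rule joint_hist_length)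
  then have "jo \<noteq> []" using assms(2) by auto
  then have "last jo = jo ! (nP M - 1)" using len by (simp add: last_conv_nth)
  then show ?thesis using recon_joint_hist[OF assms(1), of "nP M - 1"] assms(2) len by simp
qed

context
  fixes M :: "('x,'u,'z) decpomdp"
    and \<zeta> :: "nat \<Rightarrow> 'z \<Rightarrow> 'u \<times> 'z"
    and \<tau> :: nat
    and s :: "('x \<times> ('u,'z) hist list) pmf"
  assumes occ: "occupancy_state M \<zeta> \<tau> s"
begin

lemma set_cond_pmf_node:
  assumes "node M s i os us" and "(x, jo) \<in> set_pmf (cond_pmf s (cset os))"
  shows "take i jo = os" and "joint_hist M \<zeta> \<tau> jo" and "length jo = nP M"
proof -
  have "set_pmf s \<inter> cset os \<noteq> {}" and "length os = i" using assms(1) by (auto simp: node_def)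
  then show "take i jo = os" and jo: "joint_hist M \<zeta> \<tau> jo"
    using set_cond_pmf_cset[OF _ assms(2)] occ by (auto simp: occupancy_state_def)
  from jo show "length jo = nP M" by (rule joint_hist_length)
qed

lemma node_last_joint_hist:
  assumes "node M s (nP M) os us"
  shows "joint_hist M \<zeta> \<tau> os"
proof -
  have "set_pmf s \<inter> cset os \<noteq> {}" and "length os = nP M"
    using assms by (auto simp: node_def)
  then obtain x jo where "(x, jo) \<in> set_pmf s" and "take (nP M) jo = os"
    by (auto simp: cset_def)
  moreover from this have "joint_hist M \<zeta> \<tau> jo"
    using occ by (auto simp: occupancy_state_def)
  ultimately show ?thesis using joint_hist_length by fastforce
qed

lemma recon_last_node:
  assumes "node M s (nP M) os us"
  shows "recon \<zeta> (nP M) (last os) = os"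
  using recon_last_joint_hist[OF node_last_joint_hist[OF assms]] assms by (simp add: node_def)

lemma set_cond_pmf_last_node:
  assumes "node M s (nP M) os us" and "(x, jo) \<in> set_pmf (cond_pmf s (cset os))"
  shows "jo = os"
  using set_cond_pmf_node[OF assms] by simp

lemma node_Suc:
  assumes "node M s i os us" and "i < nP M" and "u \<in> Us M i"
    and "(x, jo) \<in> set_pmf (cond_pmf s (cset os))"
  shows "node M s (Suc i) (take (Suc i) jo) (us @ [u])"
proof -
  have "(x, jo) \<in> set_pmf s"
    using assms(1) set_cond_pmf_cset(1)[OF _ assms(4)] by (simp add: node_def)
  moreover have "length jo = nP M" using set_cond_pmf_node(3)[OF assms(1,4)] .
  moreover have us: "length us = i - 1" "1 \<le> i" "\<forall>j<i - 1. us ! j \<in> Us M (Suc j)"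
    using assms(1) by (auto simp: node_def)
  have "(us @ [u]) ! j \<in> Us M (Suc j)" if "j < i" for j
  proof (cases "j < i - 1")
    case False
    then have "Suc j = i" using us(2) that by linarith
    then show ?thesis using us(1) assms(3) by (auto simp: nth_append)
  qed (use us in \<open>simp add: nth_append\<close>)
  ultimately show ?thesis
    using assms(1,2) by (auto simp: node_def cset_def)
qed

lemma next_nocc_eq_map_nb:
  assumes "node M s i os us" and "nb s (nP M - i) os = BelN p"
  shows "next_nocc M s os us u = map_pmf (\<lambda>(h, b). (b, h, us @ [u])) p"
proof -
  have i: "length os = i" using assms(1) by (simp add: node_def)
  obtain k where k: "nP M - i = Suc k" using assms(2) by (cases "nP M - i") auto
  have p: "p = map_pmf (\<lambda>(x, jo). (jo ! i, nb s k (take (Suc i) jo))) (cond_pmf s (cset os))"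
    using assms(2) k i by simp
  have "nocc M s (take (Suc i) jo) (us @ [u]) = (nb s k (take (Suc i) jo), jo ! i, us @ [u])"
    if "(x, jo) \<in> set_pmf (cond_pmf s (cset os))" for x jo
  proof -
    have "nP M - Suc i = k" and "i < nP M" using k by simp_all
    then show ?thesis
      using set_cond_pmf_node(3)[OF assms(1) that] by (simp add: nocc_def last_take_Suc)
  qed
  then have "next_nocc M s os us u =
      map_pmf (\<lambda>(x, jo). (nb s k (take (Suc i) jo), jo ! i, us @ [u])) (cond_pmf s (cset os))"
    unfolding next_nocc_def i by (intro map_pmf_cong) auto
  then show ?thesis by (simp add: p pmf.map_comp comp_def case_prod_unfold)
qed

lemma payoff_eq_Qt:
  assumes "node M s (nP M) os us"
  shows "payoff s \<beta> os us u = Qt M \<zeta> \<beta> 0 (nb s 0 os) (last os) us u"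
proof -
  have "payoff s \<beta> os us u =
      measure_pmf.expectation (cond_pmf s (cset os)) (\<lambda>(x, jo). \<beta> x os (us @ [u]))"
    unfolding payoff_def
    by (intro integral_cong_AE AE_pmfI) (auto dest: set_cond_pmf_last_node[OF assms])
  then show ?thesis using recon_last_node[OF assms] by (simp add: case_prod_unfold)
qed

lemma Qv_eq_Qt:
  assumes "node M s i os us" and "u \<in> Us M i"
  shows "Qv M s \<beta> (nP M - i) os us u = Qt M \<zeta> \<beta> (nP M - i) (nb s (nP M - i) os) (last os) us u"
  using assms
proof (induction "nP M - i" arbitrary: i os us u)
  case 0
  then have "i = nP M" by (simp add: node_def)
  then show ?case using payoff_eq_Qt 0 by simp
next
  case (Suc k)
  have i: "length os = i" "length us + 2 = Suc i" and k: "nP M - Suc i = k"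
    using Suc.prems(1) Suc.hyps(2) by (auto simp: node_def)
  have "Max ((\<lambda>u'. Qv M s \<beta> k (take (Suc i) jo) (us @ [u]) u') ` Us M (Suc i)) =
        Max ((\<lambda>u'. Qt M \<zeta> \<beta> k (nb s k (take (Suc i) jo)) (jo ! i) (us @ [u]) u') ` Us M (Suc i))"
    if jo: "(x, jo) \<in> set_pmf (cond_pmf s (cset os))" for x jo
  proof -
    have "i < nP M" using Suc.hyps(2) by simp
    then have "node M s (Suc i) (take (Suc i) jo) (us @ [u])"
      using node_Suc[OF Suc.prems(1) _ Suc.prems(2) jo] by simp
    moreover have "last (take (Suc i) jo) = jo ! i"
      using set_cond_pmf_node(3)[OF Suc.prems(1) jo] \<open>i < nP M\<close> by (simp add: last_take_Suc)
    ultimately show ?thesis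
      using Suc.hyps(1)[of "Suc i"] k by (intro arg_cong[where f = Max] image_cong) auto
  qed
  then have "Qv M s \<beta> (Suc k) os us u = measure_pmf.expectation (cond_pmf s (cset os))
      (\<lambda>(x, jo). Max ((\<lambda>u'. Qt M \<zeta> \<beta> k (nb s k (take (Suc i) jo)) (jo ! i) (us @ [u]) u')
                       ` Us M (Suc i)))"
    unfolding Qv.simps i by (intro integral_cong_AE AE_pmfI) auto
  then show ?case using i Suc.hyps(2)[symmetric] by (simp add: case_prod_unfold)
qed

end

theorem theorem2:
  fixes M :: "('x,'u,'z) decpomdp"
    and \<zeta> :: "nat \<Rightarrow> 'z \<Rightarrow> 'u \<times> 'z"
    and \<tau> :: nat
    and s :: "('x \<times> ('u,'z) hist list) pmf"
    and \<beta> :: "'x \<Rightarrow> ('u,'z) hist list \<Rightarrow> 'u list \<Rightarrow> real"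
  assumes "is_decpomdp M"
    and "hier_info_sharing M \<zeta>"
    and "occupancy_state M \<zeta> \<tau> s"
  shows "(\<forall>i os us os' us' u.
            node M s i os us \<and> node M s i os' us' \<and> i < nP M \<and> u \<in> Us M i \<and>
            nocc M s os us = nocc M s os' us'
            \<longrightarrow> next_nocc M s os us u = next_nocc M s os' us' u)
       \<and> (\<forall>os us os' us' u.
            node M s (nP M) os us \<and> node M s (nP M) os' us' \<and> u \<in> Us M (nP M) \<and>
            nocc M s os us = nocc M s os' us'
            \<longrightarrow> payoff s \<beta> os us u = payoff s \<beta> os' us' u)
       \<and> (\<forall>i os us u.
            node M s i os us \<and> u \<in> Us M i
            \<longrightarrow> Qv M s \<beta> (nP M - i) os us u =
                Qt M \<zeta> \<beta> (nP M - i) (nb s (nP M - i) os) (last os) us u)"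
proof (intro conjI allI impI)
  fix i os us os' us' u
  assume H: "node M s i os us \<and> node M s i os' us' \<and> i < nP M \<and> u \<in> Us M i \<and>
            nocc M s os us = nocc M s os' us'"
  then have "nb s (nP M - i) os = nb s (nP M - i) os'" and "us = us'"
    by (auto simp: nocc_def node_def)
  moreover obtain p where "nb s (nP M - i) os = BelN p"
    using H by (cases "nP M - i") auto
  ultimately show "next_nocc M s os us u = next_nocc M s os' us' u"
    using next_nocc_eq_map_nb[OF assms(3)] H by metis
next
  fix os us os' us' u
  assume H: "node M s (nP M) os us \<and> node M s (nP M) os' us' \<and> u \<in> Us M (nP M) \<and>
            nocc M s os us = nocc M s os' us'"
  then have "last os = last os'" and "us = us'" by (auto simp: nocc_def node_def)
  then show "payoff s \<beta> os us u = payoff s \<beta> os' us' u"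
    using recon_last_node[OF assms(3)] H by metis
next
  fix i os us u
  assume "node M s i os us \<and> u \<in> Us M i"
  then show "Qv M s \<beta> (nP M - i) os us u =
      Qt M \<zeta> \<beta> (nP M - i) (nb s (nP M - i) os) (last os) us u"
    using Qv_eq_Qt[OF assms(3)] by blast
qed

end
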